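(* A bipartite graph $G$ contains a repairable maximum stable set if and only if $G$ contains a perfect matching $M$ such that every edge of $M$ has an endpoint of degree one in $G$.
   Context: A maximum stable set is a stable set of maximum cardinality. A stable set $S$ of $G=(V,E)$ is repairable if for every $v\in S$ there exists $u\in V\setminus S$ such that $(S\setminus\{v\})\cup\{u\}$ is a stable set. *)

theory Defs
  imports Main
begin

definition graph :: "'a set \<Rightarrow> 'a set set \<Rightarrow> bool" where
  "graph V E \<longleftrightarrow> finite V \<and> (\<forall>e\<in>E. e \<subseteq> V \<and> card e = 2)"

definition bipartite :: "'a set \<Rightarrow> 'a set set \<Rightarrow> bool" where
  "bipartite V E \<longleftrightarrow> (\<exists>A B. A \<union> B = V \<and> A \<inter> B = {} \<and>
      (\<forall>e\<in>E. card (e \<inter> A) = 1 \<and> card (e \<inter> B) = 1))"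

definition degree :: "'a set set \<Rightarrow> 'a \<Rightarrow> nat" where
  "degree E v = card {e\<in>E. v \<in> e}"

definition stable_set :: "'a set \<Rightarrow> 'a set set \<Rightarrow> 'a set \<Rightarrow> bool" where
  "stable_set V E S \<longleftrightarrow> S \<subseteq> V \<and> (\<forall>e\<in>E. \<not> e \<subseteq> S)"

definition maximum_stable_set :: "'a set \<Rightarrow> 'a set set \<Rightarrow> 'a set \<Rightarrow> bool" where
  "maximum_stable_set V E S \<longleftrightarrow> stable_set V E S \<and>
      (\<forall>T. stable_set V E T \<longrightarrow> card T \<le> card S)"

definition repairable :: "'a set \<Rightarrow> 'a set set \<Rightarrow> 'a set \<Rightarrow> bool" where
  "repairable V E S \<longleftrightarrow> stable_set V E S \<and>
      (\<forall>v\<in>S. \<exists>u\<in>V - S. stable_set V E ((S - {v}) \<union> {u}))"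

definition perfect_matching :: "'a set \<Rightarrow> 'a set set \<Rightarrow> 'a set set \<Rightarrow> bool" where
  "perfect_matching V E M \<longleftrightarrow> M \<subseteq> E \<and>
      (\<forall>v\<in>V. \<exists>!e. e \<in> M \<and> v \<in> e)"

end

theory Submission
  imports Defs
begin

text \<open>
  If every edge of a perfect matching M has a leaf, pick one leaf from each edge. These leaves form
  a stable set, and no stable set has more than one vertex on an edge of M, so they form a maximum
  one. A leaf can be exchanged for its partner in M: a leaf adjacent to that partner would have the
  partner's matching edge as its only edge, so it is the leaf removed.

  Conversely, if u repairs v in a maximum stable set S, then maximality forces v to be the only
  neighbour of u in S. Hence the repair map f from S to the rest of V is injective, and since both
  sides of a bipartition are stable, |V| \<le> 2|S|, so f is a bijection onto the complement of S.
  The edges {v, f v} then form a perfect matching, and each v in S is a leaf: a neighbour of v lies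
  outside S, so it is some f v', whose only neighbour in S is v'.
\<close>

lemma card_2_obtain_partner:
  assumes "card e = 2" "x \<in> e"
  obtains y where "y \<noteq> x" "e = {x, y}"
proof -
  obtain a b where ab: "e = {a, b}" "a \<noteq> b" using assms(1) unfolding card_2_iff by blast
  show thesis
  proof (cases "x = a")
    case True
    with ab that[of b] show thesis by simp
  next
    case False
    with ab assms(2) that[of a] show thesis by (auto simp: insert_commute)
  qed
qed

lemma card_2_eq_doubleton:
  assumes "card e = 2" "x \<in> e" "y \<in> e" "x \<noteq> y"
  shows "e = {x, y}"
  using assms unfolding card_2_iff by auto

lemma graph_finite_edges:
  assumes "graph V E"
  shows "finite E"
proof (rule finite_subset)
  show "E \<subseteq> Pow V" using assms by (auto simp: graph_def)
  show "finite (Pow V)" using assms by (simp add: graph_def)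
qed

lemma graph_edge_obtain_partner:
  assumes "graph V E" "e \<in> E" "x \<in> e"
  obtains y where "y \<in> V" "y \<noteq> x" "e = {x, y}"
proof -
  have "card e = 2" "e \<subseteq> V" using assms by (auto simp: graph_def)
  moreover obtain y where "y \<noteq> x" "e = {x, y}"
    using card_2_obtain_partner \<open>card e = 2\<close> assms(3) .
  ultimately show thesis using that by blast
qed

lemma stable_set_subset:
  assumes "stable_set V E S" "T \<subseteq> S"
  shows "stable_set V E T"
  using assms unfolding stable_set_def by (meson order_trans)

lemma stable_set_insert_iff:
  assumes "graph V E"
  shows "stable_set V E (insert u S) \<longleftrightarrow>
    stable_set V E S \<and> u \<in> V \<and> (\<forall>w\<in>S. {u, w} \<notin> E)"
proof
  assume "stable_set V E (insert u S)"
  then have "insert u S \<subseteq> V" and no_edge: "\<forall>e\<in>E. \<not> e \<subseteq> insert u S"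
    by (auto simp: stable_set_def)
  moreover have "{u, w} \<subseteq> insert u S" if "w \<in> S" for w using that by blast
  ultimately show "stable_set V E S \<and> u \<in> V \<and> (\<forall>w\<in>S. {u, w} \<notin> E)"
    unfolding stable_set_def by blast
next
  assume st: "stable_set V E S \<and> u \<in> V \<and> (\<forall>w\<in>S. {u, w} \<notin> E)"
  show "stable_set V E (insert u S)"
    unfolding stable_set_def
  proof (intro conjI ballI notI)
    show "insert u S \<subseteq> V" using st by (simp add: stable_set_def)
  next
    fix e assume e: "e \<in> E" "e \<subseteq> insert u S"
    show False
    proof (cases "u \<in> e")
      case True
      then obtain w where "w \<noteq> u" "e = {u, w}"
        using graph_edge_obtain_partner[OF assms e(1)] by blast
      with e st show False by auto
    next
      case False
      with e st show False by (auto simp: stable_set_def)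
    qed
  qed
qed

lemma degree_one_unique_edge:
  assumes "degree E l = 1" "e \<in> E" "l \<in> e" "e' \<in> E" "l \<in> e'"
  shows "e = e'"
proof -
  obtain e0 where e0: "{e\<in>E. l \<in> e} = {e0}"
    using assms(1) unfolding degree_def by (rule card_1_singletonE)
  have "e \<in> {e\<in>E. l \<in> e}" "e' \<in> {e\<in>E. l \<in> e}" using assms(2-) by simp_all
  then show ?thesis unfolding e0 by simp
qed

lemma perfect_matching_edge_unique:
  assumes "graph V E" "perfect_matching V E M" "e \<in> M" "e' \<in> M" "x \<in> e" "x \<in> e'"
  shows "e = e'"
proof -
  have "x \<in> V" using assms by (auto simp: graph_def perfect_matching_def)
  with assms show ?thesis unfolding perfect_matching_def by blast
qed

lemma perfect_matching_contains_leaf_edge: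
  assumes "graph V E" "perfect_matching V E M" "degree E l = 1" "e \<in> E" "l \<in> e"
  shows "e \<in> M"
proof -
  have "l \<in> V" using assms by (auto simp: graph_def)
  then obtain e' where "e' \<in> M" "l \<in> e'" "e' \<in> E"
    using assms(2) unfolding perfect_matching_def by blast
  with assms show ?thesis using degree_one_unique_edge by metis
qed

lemma card_stable_set_le_card_perfect_matching:
  assumes g: "graph V E" and pm: "perfect_matching V E M" and st: "stable_set V E T"
  shows "card T \<le> card M"
proof -
  define edge_of where "edge_of x = (THE e. e \<in> M \<and> x \<in> e)" for x
  have edge_of: "edge_of x \<in> M \<and> x \<in> edge_of x" if "x \<in> T" for x
  proof -
    have "x \<in> V" using st that by (auto simp: stable_set_def)
    then have "\<exists>!e. e \<in> M \<and> x \<in> e" using pm by (simp add: perfect_matching_def)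
    then show ?thesis unfolding edge_of_def by (rule theI')
  qed
  have "inj_on edge_of T"
  proof (rule inj_onI, rule ccontr)
    fix x y assume xy: "x \<in> T" "y \<in> T" "edge_of x = edge_of y" "x \<noteq> y"
    have "edge_of x \<in> E" using edge_of[OF xy(1)] pm by (auto simp: perfect_matching_def)
    moreover have "edge_of x = {x, y}"
    proof (rule card_2_eq_doubleton)
      show "card (edge_of x) = 2" using g \<open>edge_of x \<in> E\<close> by (simp add: graph_def)
      show "x \<in> edge_of x" "y \<in> edge_of x" using edge_of xy(1-3) by metis+
    qed (rule xy(4))
    ultimately show False using st xy(1,2) by (auto simp: stable_set_def)
  qed
  moreover have "edge_of ` T \<subseteq> M" using edge_of by blast
  moreover have "finite M"
    using graph_finite_edges[OF g] pm finite_subset unfolding perfect_matching_def by blast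
  ultimately show ?thesis by (rule card_inj_on_le)
qed

lemma stable_set_if_meets_edges_once:
  assumes "graph V E" "A \<subseteq> V" "\<forall>e\<in>E. card (e \<inter> A) = 1"
  shows "stable_set V E A"
  unfolding stable_set_def
proof (intro conjI ballI notI)
  fix e assume "e \<in> E" "e \<subseteq> A"
  then have "card (e \<inter> A) = 2" using assms(1) by (simp add: Int_absorb2 graph_def)
  with assms(3) \<open>e \<in> E\<close> show False by simp
qed (rule assms(2))

lemma bipartite_card_le_twice_maximum_stable_set:
  assumes g: "graph V E" and "bipartite V E" and mx: "maximum_stable_set V E S"
  shows "card V \<le> 2 * card S"
proof -
  obtain A B where AB: "A \<union> B = V" "A \<inter> B = {}"
    and meets: "\<forall>e\<in>E. card (e \<inter> A) = 1 \<and> card (e \<inter> B) = 1"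
    using assms(2) by (auto simp: bipartite_def)
  have "stable_set V E A" "stable_set V E B"
    using stable_set_if_meets_edges_once[OF g] AB meets by auto
  then have "card A \<le> card S" "card B \<le> card S"
    using mx by (auto simp: maximum_stable_set_def)
  moreover have "card V = card A + card B"
    using g AB card_Un_disjoint[of A B] by (auto simp: graph_def)
  ultimately show ?thesis by simp
qed

lemma perfect_matching_of_bij_betw:
  assumes bij: "bij_betw f S (V - S)" and "S \<subseteq> V"
    and edges: "\<And>v. v \<in> S \<Longrightarrow> {v, f v} \<in> E"
  shows "perfect_matching V E ((\<lambda>v. {v, f v}) ` S)"
  unfolding perfect_matching_def
proof (intro conjI ballI)
  show "(\<lambda>v. {v, f v}) ` S \<subseteq> E" using edges by blast
next
  fix x assume "x \<in> V"
  have inj: "inj_on f S" and image: "f ` S = V - S" using bij by (auto simp: bij_betw_def)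
  obtain v where v: "v \<in> S" "x \<in> {v, f v}"
  proof (cases "x \<in> S")
    case False
    with \<open>x \<in> V\<close> image that show thesis by (metis Diff_iff imageE insertCI)
  qed (use that in blast)
  have unique: "v = v'" if "v \<in> S" "v' \<in> S" "x \<in> {v, f v}" "x \<in> {v', f v'}" for v v'
  proof (cases "x \<in> S")
    case True
    moreover have "f v \<notin> S" "f v' \<notin> S" using image that(1,2) by auto
    ultimately show ?thesis using that(3,4) by auto
  next
    case False
    then have "f v = f v'" using that(3,4) \<open>v \<in> S\<close> \<open>v' \<in> S\<close> by auto
    then show ?thesis using inj_onD[OF inj _ that(1,2)] by simp
  qed
  show "\<exists>!e. e \<in> (\<lambda>v. {v, f v}) ` S \<and> x \<in> e"
  proof (rule ex1I)
    show "{v, f v} \<in> (\<lambda>v. {v, f v}) ` S \<and> x \<in> {v, f v}" using v by blast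
  next
    fix e assume "e \<in> (\<lambda>v. {v, f v}) ` S \<and> x \<in> e"
    then obtain v' where "v' \<in> S" "e = {v', f v'}" "x \<in> {v', f v'}" by blast
    with unique[OF v(1) _ v(2)] show "e = {v, f v}" by simp
  qed
qed

context
  fixes V :: "'a set" and E M :: "'a set set" and leaf :: "'a set \<Rightarrow> 'a"
  assumes g: "graph V E" and pm: "perfect_matching V E M"
    and leaf: "\<And>e. e \<in> M \<Longrightarrow> leaf e \<in> e \<and> degree E (leaf e) = 1"
begin

lemma edge_at_leaf_eq_matching_edge:
  assumes "e \<in> M" "e' \<in> E" "leaf e \<in> e'"
  shows "e' = e"
  using assms leaf perfect_matching_contains_leaf_edge[OF g pm]
    perfect_matching_edge_unique[OF g pm] by metis

lemma inj_on_leaf: "inj_on leaf M"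
  by (rule inj_onI) (metis leaf perfect_matching_edge_unique[OF g pm])

lemma stable_set_leaves: "stable_set V E (leaf ` M)"
  unfolding stable_set_def
proof (intro conjI ballI notI)
  show "leaf ` M \<subseteq> V" using leaf g pm by (fastforce simp: graph_def perfect_matching_def)
next
  fix e assume e: "e \<in> E" "e \<subseteq> leaf ` M"
  have "card e = 2" using e(1) g by (simp add: graph_def)
  then obtain x y where "e = {x, y}" "x \<noteq> y" unfolding card_2_iff by blast
  then have "x \<in> e" "y \<in> e" "x \<noteq> y" by simp_all
  then obtain ex ey where "ex \<in> M" "ey \<in> M" "x = leaf ex" "y = leaf ey" using e by blast
  with e \<open>x \<in> e\<close> \<open>y \<in> e\<close> have "ex = e" "ey = e" using edge_at_leaf_eq_matching_edge by auto
  with \<open>x = leaf ex\<close> \<open>y = leaf ey\<close> \<open>x \<noteq> y\<close> show False by simp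
qed

lemma maximum_stable_set_leaves: "maximum_stable_set V E (leaf ` M)"
  unfolding maximum_stable_set_def
  using stable_set_leaves card_stable_set_le_card_perfect_matching[OF g pm]
  by (simp add: card_image[OF inj_on_leaf])

lemma repairable_leaves: "repairable V E (leaf ` M)"
  unfolding repairable_def
proof (intro conjI ballI stable_set_leaves)
  fix v assume "v \<in> leaf ` M"
  then obtain e where e: "e \<in> M" "v = leaf e" by blast
  then have "e \<in> E" "v \<in> e" using pm leaf by (auto simp: perfect_matching_def)
  then obtain u where u: "u \<in> V" "u \<noteq> v" "e = {v, u}" by (rule graph_edge_obtain_partner[OF g])
  have no_leaf_nbr: "{u, w} \<notin> E" if w: "w \<in> leaf ` M - {v}" for w
  proof
    assume "{u, w} \<in> E"
    obtain ew where "ew \<in> M" "w = leaf ew" using w by blast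
    with \<open>{u, w} \<in> E\<close> have "ew = {u, w}" using edge_at_leaf_eq_matching_edge by auto
    then have "ew = e" using perfect_matching_edge_unique[OF g pm] \<open>ew \<in> M\<close> e u by blast
    with \<open>ew = {u, w}\<close> u w show False by auto
  qed
  have "stable_set V E (leaf ` M - {v})"
    using stable_set_leaves by (rule stable_set_subset) blast
  then have "stable_set V E (insert u (leaf ` M - {v}))"
    using stable_set_insert_iff[OF g] no_leaf_nbr u(1) by blast
  moreover have "u \<notin> leaf ` M"
    using e u edge_at_leaf_eq_matching_edge \<open>e \<in> E\<close> by fastforce
  ultimately show "\<exists>u\<in>V - leaf ` M. stable_set V E (leaf ` M - {v} \<union> {u})"
    using u(1) by auto
qed

end

lemma repair_vertex_neighbours:
  assumes g: "graph V E" and mx: "maximum_stable_set V E S"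
    and "v \<in> S" "u \<in> V - S" and repaired: "stable_set V E (insert u (S - {v}))"
  shows "{w\<in>S. {u, w} \<in> E} = {v}"
proof -
  have st: "stable_set V E S" and nbrs: "\<forall>w\<in>S - {v}. {u, w} \<notin> E"
    using mx repaired stable_set_insert_iff[OF g] by (auto simp: maximum_stable_set_def)
  have "{u, v} \<in> E"
  proof (rule ccontr)
    assume "{u, v} \<notin> E"
    with nbrs st \<open>u \<in> V - S\<close> have "stable_set V E (insert u S)"
      using stable_set_insert_iff[OF g] by blast
    then have "card (insert u S) \<le> card S" using mx by (simp add: maximum_stable_set_def)
    moreover have "finite S" using st g finite_subset by (auto simp: stable_set_def graph_def)
    ultimately show False using \<open>u \<in> V - S\<close> by simp
  qed
  with nbrs \<open>v \<in> S\<close> show ?thesis by blast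
qed

context
  fixes V :: "'a set" and E :: "'a set set" and S :: "'a set" and f :: "'a \<Rightarrow> 'a"
  assumes g: "graph V E" and st: "stable_set V E S"
    and nbrs: "\<And>v. v \<in> S \<Longrightarrow> {w\<in>S. {f v, w} \<in> E} = {v}"
begin

lemma edge_to_unique_neighbour: "v \<in> S \<Longrightarrow> {v, f v} \<in> E"
  using nbrs[of v] by (auto simp: insert_commute)

lemma inj_on_unique_neighbour: "inj_on f S"
proof (rule inj_onI)
  fix v v' assume "v \<in> S" "v' \<in> S" "f v = f v'"
  have "{v} = {w\<in>S. {f v', w} \<in> E}" using nbrs[OF \<open>v \<in> S\<close>] \<open>f v = f v'\<close> by simp
  also have "\<dots> = {v'}" using nbrs[OF \<open>v' \<in> S\<close>] .
  finally show "v = v'" by simp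
qed

lemma degree_eq_1_if_bij_betw_complement:
  assumes bij: "bij_betw f S (V - S)" and "v \<in> S"
  shows "degree E v = 1"
proof -
  have "e = {v, f v}" if e: "e \<in> E" "v \<in> e" for e
  proof -
    obtain w where w: "w \<in> V" "e = {v, w}" using graph_edge_obtain_partner[OF g e] .
    then have "w \<notin> S" using st \<open>v \<in> S\<close> \<open>e \<in> E\<close> by (auto simp: stable_set_def)
    then obtain v' where "v' \<in> S" "w = f v'" using bij w(1) by (auto simp: bij_betw_def)
    then have "v = v'"
      using nbrs[OF \<open>v' \<in> S\<close>] \<open>v \<in> S\<close> \<open>e \<in> E\<close> w by (auto simp: insert_commute)
    with w \<open>w = f v'\<close> show ?thesis by simp
  qed
  then have "{e\<in>E. v \<in> e} = {{v, f v}}" using edge_to_unique_neighbour \<open>v \<in> S\<close> by auto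
  then show ?thesis by (simp add: degree_def)
qed

end

lemma maximum_repairable_stable_set_obtain_perfect_matching:
  assumes g: "graph V E" and bp: "bipartite V E"
    and mx: "maximum_stable_set V E S" and rp: "repairable V E S"
  obtains M where "perfect_matching V E M" "\<forall>e\<in>M. \<exists>v\<in>e. degree E v = 1"
proof -
  have st: "stable_set V E S" using mx by (simp add: maximum_stable_set_def)
  have "finite V" using g by (simp add: graph_def)
  have "S \<subseteq> V" using st by (simp add: stable_set_def)
  obtain f where f: "\<forall>v\<in>S. f v \<in> V - S \<and> stable_set V E (insert (f v) (S - {v}))"
    using rp bchoice[of S "\<lambda>v u. u \<in> V - S \<and> stable_set V E (insert u (S - {v}))"]
    by (auto simp: repairable_def)
  have nbrs: "{w\<in>S. {f v, w} \<in> E} = {v}" if "v \<in> S" for v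
    using f that by (intro repair_vertex_neighbours[OF g mx]) auto
  note inj = inj_on_unique_neighbour[OF g st nbrs]
  have "f ` S = V - S"
  proof (rule card_seteq)
    show "finite (V - S)" using \<open>finite V\<close> by simp
    show "f ` S \<subseteq> V - S" using f by blast
    have "card V \<le> 2 * card S" by (rule bipartite_card_le_twice_maximum_stable_set[OF g bp mx])
    then show "card (V - S) \<le> card (f ` S)"
      using card_image[OF inj] \<open>finite V\<close>
        card_Diff_subset[OF finite_subset[OF \<open>S \<subseteq> V\<close>] \<open>S \<subseteq> V\<close>] by simp
  qed
  with inj have bij: "bij_betw f S (V - S)" by (simp add: bij_betw_def)
  show thesis
  proof
    show "perfect_matching V E ((\<lambda>v. {v, f v}) ` S)"
      using bij \<open>S \<subseteq> V\<close> edge_to_unique_neighbour[OF g st nbrs]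
      by (rule perfect_matching_of_bij_betw)
    show "\<forall>e\<in>(\<lambda>v. {v, f v}) ` S. \<exists>v\<in>e. degree E v = 1"
      using degree_eq_1_if_bij_betw_complement[OF g st nbrs bij] by blast
  qed
qed

theorem lemma3:
  fixes V :: "'a set" and E :: "'a set set"
  assumes "graph V E" and "bipartite V E"
  shows "(\<exists>S. maximum_stable_set V E S \<and> repairable V E S) \<longleftrightarrow>
         (\<exists>M. perfect_matching V E M \<and> (\<forall>e\<in>M. \<exists>v\<in>e. degree E v = 1))"
proof
  assume "\<exists>S. maximum_stable_set V E S \<and> repairable V E S"
  then obtain S where "maximum_stable_set V E S" "repairable V E S" by blast
  with assms show "\<exists>M. perfect_matching V E M \<and> (\<forall>e\<in>M. \<exists>v\<in>e. degree E v = 1)"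
    using maximum_repairable_stable_set_obtain_perfect_matching by metis
next
  assume "\<exists>M. perfect_matching V E M \<and> (\<forall>e\<in>M. \<exists>v\<in>e. degree E v = 1)"
  then obtain M leaf where "perfect_matching V E M"
    and "\<And>e. e \<in> M \<Longrightarrow> leaf e \<in> e \<and> degree E (leaf e) = 1"
    by metis
  then show "\<exists>S. maximum_stable_set V E S \<and> repairable V E S"
    using maximum_stable_set_leaves repairable_leaves assms(1) by blast
qed

end
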